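(* Let $X,Y,T$ be cellular spaces with $X$ and $T$ compact, let $r\ge0$, and let $a,b\colon X\to Y$ be maps with $a\overset{r}{\approx}b$. Then the maps $a\wedge\mathrm{id}_T,\ b\wedge\mathrm{id}_T\colon X\wedge T\to Y\wedge T$ satisfy $a\wedge\mathrm{id}_T\overset{r}{\approx}b\wedge\mathrm{id}_T$.
   Context: Cellular space = based CW complex; maps based. Strong similarity: $\langle W\rangle$ = free abelian group on a set $W$. $Y^X$ = based maps (compact-open), based at the constant map; $Y^X_a$ = path component of $a$; $V\mapsto V|_R$ restriction; $\mathcal F_n(X)$ = finite $R\subseteq X$ containing the basepoint with $|R|\le n+1$; $\langle Y^X\rangle^{(s)}=\{V:V|_R=0\ \forall R\in\mathcal F_{s-1}(X)\}$. For unbased $U,V$: $V^{(U)}$ = unbased maps; $\Xi^U(v)$ = constant map at $v$; for $U=\coprod_iU_i$ the combining product $\boxed{\sqcup}_i\langle w_i\rangle=\langle w\rangle$, $w|_{U_i}=w_i$, multilinear. For nonempty finite $E$: simplex $\Delta E$, faces $\Delta F$; layouts = sets $A$ of pairwise disjoint nonempty subsets; $\Delta[A]=\coprod_{F\in A}\Delta F$; $S\in\langle V^{(\Delta E)}\rangle$ fissile if $S|_{\Delta[A]}=\boxed{\sqcup}_{F\in A}S|_{\Delta F}$ for all layouts. $U\wr X=(U\times X)/(U\times\{x_0\})$, $\#^X(w)(u\wr x)=w(u)(x)$, $\langle (Y^X)^{(U)}\rangle^{(s)}_X=\langle\#^X\rangle^{-1}\langle Y^{U\wr X}\rangle^{(s)}$.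 $a\overset{r}{\approx}b$ iff for each nonempty finite $E$ there is a fissile $S\in\langle (Y^X_a)^{(\Delta E)}\rangle$ with $\langle\Xi^{\Delta E}(b)\rangle-S\in\langle (Y^X)^{(\Delta E)}\rangle^{(r+1)}_X$. *)

theory Defs
  imports "HOL-Analysis.Analysis" "HOL-Algebra.Free_Abelian_Groups"
begin

definition disk_set :: "nat \<Rightarrow> (nat \<Rightarrow> real) set" where
  "disk_set n = {x. (\<forall>i\<ge>n. x i = 0) \<and> (\<Sum>i<n. (x i)\<^sup>2) \<le> 1}"

definition open_disk_set :: "nat \<Rightarrow> (nat \<Rightarrow> real) set" where
  "open_disk_set n = {x. (\<forall>i\<ge>n. x i = 0) \<and> (\<Sum>i<n. (x i)\<^sup>2) < 1}"

definition sphere_set :: "nat \<Rightarrow> (nat \<Rightarrow> real) set" where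
  "sphere_set n = {x. (\<forall>i\<ge>n. x i = 0) \<and> (\<Sum>i<n. (x i)\<^sup>2) = 1}"

definition disk_top :: "nat \<Rightarrow> (nat \<Rightarrow> real) topology" where
  "disk_top n = subtopology (powertop_real UNIV) (disk_set n)"

text \<open>The simplex on a finite vertex set E (taken inside nat): barycentric coordinates.\<close>
definition simplex_set :: "nat set \<Rightarrow> (nat \<Rightarrow> real) set" where
  "simplex_set E = {t. (\<forall>i. i \<notin> E \<longrightarrow> t i = 0) \<and> (\<forall>i\<in>E. 0 \<le> t i) \<and> sum t E = 1}"

definition simplex_top :: "nat set \<Rightarrow> (nat \<Rightarrow> real) topology" where
  "simplex_top E = subtopology (powertop_real UNIV) (simplex_set E)"

text \<open>A CW structure: a set C of cells, each given by its dimension n and a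
  characteristic map from the closed n-disk.\<close>
definition open_cell :: "nat \<times> ((nat \<Rightarrow> real) \<Rightarrow> 'a) \<Rightarrow> 'a set" where
  "open_cell c = snd c ` open_disk_set (fst c)"

definition cw_structure :: "'a topology \<Rightarrow> (nat \<times> ((nat \<Rightarrow> real) \<Rightarrow> 'a)) set \<Rightarrow> bool" where
  "cw_structure X C \<longleftrightarrow>
     (\<forall>c\<in>C. continuous_map (disk_top (fst c)) X (snd c)) \<and>
     (\<forall>c\<in>C. homeomorphic_map (subtopology (powertop_real UNIV) (open_disk_set (fst c)))
                (subtopology X (open_cell c)) (snd c)) \<and>
     (\<Union>c\<in>C. open_cell c) = topspace X \<and>
     (\<forall>c\<in>C. \<forall>d\<in>C. open_cell c \<inter> open_cell d \<noteq> {} \<longrightarrow> c = d) \<and>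
     (\<forall>c\<in>C. snd c ` sphere_set (fst c) \<subseteq> (\<Union>d\<in>{d\<in>C. fst d < fst c}. open_cell d)) \<and>
     (\<forall>c\<in>C. finite {d\<in>C. open_cell d \<inter> snd c ` disk_set (fst c) \<noteq> {}}) \<and>
     (\<forall>U. U \<subseteq> topspace X \<longrightarrow>
        (closedin X U \<longleftrightarrow> (\<forall>c\<in>C. closedin (disk_top (fst c)) {x \<in> disk_set (fst c). snd c x \<in> U})))"

definition cw_complex :: "'a topology \<Rightarrow> bool" where
  "cw_complex X \<longleftrightarrow> Hausdorff_space X \<and> (\<exists>C. cw_structure X C)"

text \<open>Cellular space = based CW complex: the basepoint is a 0-cell.\<close>
definition cellular_space :: "'a topology \<Rightarrow> 'a \<Rightarrow> bool" where
  "cellular_space X x0 \<longleftrightarrow> Hausdorff_space X \<and>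
     (\<exists>C. cw_structure X C \<and> (\<exists>c\<in>C. fst c = 0 \<and> open_cell c = {x0}))"

definition based_map :: "'a topology \<Rightarrow> 'a \<Rightarrow> 'b topology \<Rightarrow> 'b \<Rightarrow> ('a \<Rightarrow> 'b) \<Rightarrow> bool" where
  "based_map X x0 Y y0 f \<longleftrightarrow> continuous_map X Y f \<and> f x0 = y0"

definition collapse_cls :: "'a set \<Rightarrow> 'a \<Rightarrow> 'a set" where
  "collapse_cls A x = (if x \<in> A then A else {x})"

definition quotient_top :: "'a topology \<Rightarrow> ('a \<Rightarrow> 'b) \<Rightarrow> 'b topology" where
  "quotient_top X q = topology (\<lambda>U. U \<subseteq> q ` topspace X \<and> openin X {x \<in> topspace X. q x \<in> U})"

definition collapse_top :: "'a topology \<Rightarrow> 'a set \<Rightarrow> 'a set topology" where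
  "collapse_top X A = quotient_top X (collapse_cls A)"

definition smash_base :: "'a topology \<Rightarrow> 'a \<Rightarrow> 'c topology \<Rightarrow> 'c \<Rightarrow> ('a \<times> 'c) set" where
  "smash_base X x0 T t0 = (topspace X \<times> {t0}) \<union> ({x0} \<times> topspace T)"

text \<open>Smash product X ^ T = (X x T)/(X v T), based at the collapsed wedge.\<close>
definition smash_top :: "'a topology \<Rightarrow> 'a \<Rightarrow> 'c topology \<Rightarrow> 'c \<Rightarrow> ('a \<times> 'c) set topology" where
  "smash_top X x0 T t0 = collapse_top (prod_topology X T) (smash_base X x0 T t0)"

definition smash_id_map ::
  "'a topology \<Rightarrow> 'a \<Rightarrow> 'b topology \<Rightarrow> 'b \<Rightarrow> 'c topology \<Rightarrow> 'c \<Rightarrow> ('a \<Rightarrow> 'b)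
     \<Rightarrow> ('a \<times> 'c) set \<Rightarrow> ('b \<times> 'c) set" where
  "smash_id_map X x0 Y y0 T t0 a =
     restrict (\<lambda>c. let p = (SOME p. p \<in> c) in
                  collapse_cls (smash_base Y y0 T t0) (a (fst p), snd p))
       (topspace (smash_top X x0 T t0))"

definition wr_top :: "'u topology \<Rightarrow> 'a topology \<Rightarrow> 'a \<Rightarrow> ('u \<times> 'a) set topology" where
  "wr_top U X x0 = collapse_top (prod_topology U X) (topspace U \<times> {x0})"

definition wr_base :: "'u topology \<Rightarrow> 'a \<Rightarrow> ('u \<times> 'a) set" where
  "wr_base U x0 = topspace U \<times> {x0}"

text \<open>The map #^X(w)(u wr x) = w(u)(x).\<close>
definition hash_map :: "'u topology \<Rightarrow> 'a topology \<Rightarrow> 'a \<Rightarrow> ('u \<Rightarrow> 'a \<Rightarrow> 'b) \<Rightarrow> ('u \<times> 'a) set \<Rightarrow> 'b" where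
  "hash_map U X x0 w = restrict (\<lambda>c. let p = (SOME p. p \<in> c) in w (fst p) (snd p)) (topspace (wr_top U X x0))"

definition based_maps :: "'a topology \<Rightarrow> 'a \<Rightarrow> 'b topology \<Rightarrow> 'b \<Rightarrow> ('a \<Rightarrow> 'b) set" where
  "based_maps X x0 Y y0 = {f. based_map X x0 Y y0 f \<and> f \<in> extensional (topspace X)}"

definition unbased_maps :: "'u topology \<Rightarrow> 'v topology \<Rightarrow> ('u \<Rightarrow> 'v) set" where
  "unbased_maps U V = {f. continuous_map U V f \<and> f \<in> extensional (topspace U)}"

definition CO_top :: "'a topology \<Rightarrow> 'a \<Rightarrow> 'b topology \<Rightarrow> 'b \<Rightarrow> ('a \<Rightarrow> 'b) topology" where
  "CO_top X x0 Y y0 = topology_generated_by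
     {{f \<in> based_maps X x0 Y y0. f ` K \<subseteq> V} | K V. compactin X K \<and> openin Y V}"

definition frag_restrict :: "'a set \<Rightarrow> (('a \<Rightarrow> 'b) \<Rightarrow>\<^sub>0 int) \<Rightarrow> (('a \<Rightarrow> 'b) \<Rightarrow>\<^sub>0 int)" where
  "frag_restrict R V = frag_extend (\<lambda>w. frag_of (restrict w R)) V"

definition Fin_pts :: "'a topology \<Rightarrow> 'a \<Rightarrow> nat \<Rightarrow> 'a set set" where
  "Fin_pts X x0 n = {R. finite R \<and> R \<subseteq> topspace X \<and> x0 \<in> R \<and> card R \<le> n + 1}"

text \<open>The filtration <Y^X>^(s) (for s = 0, F_{-1} is empty, so everything).\<close>
definition filt :: "'a topology \<Rightarrow> 'a \<Rightarrow> 'b topology \<Rightarrow> 'b \<Rightarrow> nat \<Rightarrow> (('a \<Rightarrow> 'b) \<Rightarrow>\<^sub>0 int) set" where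
  "filt X x0 Y y0 s = {V \<in> carrier (free_Abelian_group (based_maps X x0 Y y0)).
      0 < s \<longrightarrow> (\<forall>R \<in> Fin_pts X x0 (s - 1). frag_restrict R V = 0)}"

definition filt_hash :: "'u topology \<Rightarrow> 'a topology \<Rightarrow> 'a \<Rightarrow> 'b topology \<Rightarrow> 'b \<Rightarrow> nat
    \<Rightarrow> (('u \<Rightarrow> 'a \<Rightarrow> 'b) \<Rightarrow>\<^sub>0 int) set" where
  "filt_hash U X x0 Y y0 s = {V \<in> carrier (free_Abelian_group (unbased_maps U (CO_top X x0 Y y0))).
      frag_extend (\<lambda>w. frag_of (hash_map U X x0 w)) V \<in> filt (wr_top U X x0) (wr_base U x0) Y y0 s}"

text \<open>Gluing a family of maps g F defined on the (pairwise disjoint) faces of the F in A.\<close>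
definition glue :: "nat set set \<Rightarrow> (nat set \<Rightarrow> (nat \<Rightarrow> real) \<Rightarrow> 'v) \<Rightarrow> (nat \<Rightarrow> real) \<Rightarrow> 'v" where
  "glue A g = (\<lambda>u. if \<exists>F\<in>A. u \<in> simplex_set F
                    then g (SOME F. F \<in> A \<and> u \<in> simplex_set F) u else undefined)"

definition comb_prod :: "nat set set \<Rightarrow> (nat set \<Rightarrow> (((nat \<Rightarrow> real) \<Rightarrow> 'v) \<Rightarrow>\<^sub>0 int))
    \<Rightarrow> (((nat \<Rightarrow> real) \<Rightarrow> 'v) \<Rightarrow>\<^sub>0 int)" where
  "comb_prod A S = (\<Sum>g \<in> Pi\<^sub>E A (\<lambda>F. Poly_Mapping.keys (S F)).
       frag_cmul (\<Prod>F\<in>A. poly_mapping.lookup (S F) (g F)) (frag_of (glue A g)))"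

definition layout :: "nat set \<Rightarrow> nat set set \<Rightarrow> bool" where
  "layout E A \<longleftrightarrow> (\<forall>F\<in>A. F \<subseteq> E \<and> F \<noteq> {}) \<and> (\<forall>F\<in>A. \<forall>G\<in>A. F \<noteq> G \<longrightarrow> F \<inter> G = {})"

definition fissile :: "nat set \<Rightarrow> (((nat \<Rightarrow> real) \<Rightarrow> 'v) \<Rightarrow>\<^sub>0 int) \<Rightarrow> bool" where
  "fissile E S \<longleftrightarrow> (\<forall>A. layout E A \<longrightarrow>
      frag_restrict (\<Union>F\<in>A. simplex_set F) S = comb_prod A (\<lambda>F. frag_restrict (simplex_set F) S))"

definition const_map :: "nat set \<Rightarrow> 'v \<Rightarrow> (nat \<Rightarrow> real) \<Rightarrow> 'v" where
  "const_map E v = restrict (\<lambda>u. v) (simplex_set E)"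

definition r_approx :: "nat \<Rightarrow> 'a topology \<Rightarrow> 'a \<Rightarrow> 'b topology \<Rightarrow> 'b
    \<Rightarrow> ('a \<Rightarrow> 'b) \<Rightarrow> ('a \<Rightarrow> 'b) \<Rightarrow> bool" where
  "r_approx r X x0 Y y0 a b \<longleftrightarrow>
     (\<forall>E. finite E \<and> E \<noteq> {} \<longrightarrow>
        (\<exists>S. S \<in> carrier (free_Abelian_group
                   (unbased_maps (simplex_top E)
                      (subtopology (CO_top X x0 Y y0)
                         (path_component_of_set (CO_top X x0 Y y0) (restrict a (topspace X)))))) \<and>
             fissile E S \<and>
             frag_of (const_map E (restrict b (topspace X))) - S \<in> filt_hash (simplex_top E) X x0 Y y0 (Suc r)))"

end

theory Submission
  imports Defs
begin

text \<open>Smashing with \<open>id\<^sub>T\<close> is a continuous map \<open>\<Phi>\<close> from the based maps \<open>X \<rightarrow> Y\<close> to the based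
  maps \<open>X \<and> T \<rightarrow> Y \<and> T\<close> (compact-open topologies) when \<open>X\<close> and \<open>T\<close> are compact Hausdorff.
  Postcomposition with \<open>\<Phi>\<close> therefore carries a fissile chain of simplices in the path component
  of \<open>a\<close> to a fissile chain in the path component of \<open>\<Phi> a\<close>, and the constant simplex at \<open>b\<close> to
  the constant simplex at \<open>\<Phi> b\<close>. It remains to see that it preserves the filtration. Every point
  of \<open>U \<wr> (X \<and> T)\<close> has the form \<open>u \<wr> (x \<and> t)\<close>, and \<open>#(\<Phi> \<circ> w)(u \<wr> (x \<and> t)) = w(u)(x) \<and> t\<close>.
  Hence on a finite set \<open>R\<close> of points, \<open>#(\<Phi> \<circ> w)\<close> is determined by \<open>#w\<close> on at most \<open>|R|\<close>
  points including the basepoint, so chains vanishing on all such sets are mapped to chains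
  vanishing on all such \<open>R\<close>.\<close>

section \<open>Pushforward of chains\<close>

definition frag_map :: "('a \<Rightarrow> 'b) \<Rightarrow> ('a \<Rightarrow>\<^sub>0 int) \<Rightarrow> ('b \<Rightarrow>\<^sub>0 int)" where
  "frag_map h = frag_extend (frag_of \<circ> h)"

lemma frag_map_of [simp]: "frag_map h (frag_of a) = frag_of (h a)"
  by (simp add: frag_map_def)

lemma frag_map_diff: "frag_map h (a - b) = frag_map h a - frag_map h b"
  by (simp add: frag_map_def frag_extend_diff)

lemma frag_map_cmul: "frag_map h (frag_cmul c a) = frag_cmul c (frag_map h a)"
  by (simp add: frag_map_def frag_extend_cmul)

lemma frag_map_sum: "finite I \<Longrightarrow> frag_map h (\<Sum>i\<in>I. g i) = (\<Sum>i\<in>I. frag_map h (g i))"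
  by (simp add: frag_map_def frag_extend_sum o_def)

lemma frag_map_compose: "frag_map f (frag_map g a) = frag_map (f \<circ> g) a"
  by (simp add: frag_map_def frag_extend_compose o_assoc)

lemma frag_map_cong: "(\<And>w. w \<in> Poly_Mapping.keys a \<Longrightarrow> f w = g w) \<Longrightarrow> frag_map f a = frag_map g a"
  unfolding frag_map_def by (rule frag_extend_eq) simp

lemma frag_extend_frag_of_eq_frag_map: "frag_extend (\<lambda>w. frag_of (h w)) = frag_map h"
  by (simp add: frag_map_def o_def)

lemma frag_restrict_eq_frag_map: "frag_restrict R = frag_map (\<lambda>w. restrict w R)"
  by (simp add: fun_eq_iff frag_restrict_def frag_map_def o_def)

lemma keys_frag_map: "Poly_Mapping.keys (frag_map h a) \<subseteq> h ` Poly_Mapping.keys a"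
  unfolding frag_map_def using keys_frag_extend[of "frag_of \<circ> h" a]
  by (auto simp: keys_frag_of)

lemma frag_map_in_free_Abelian_group:
  "(\<And>w. w \<in> Poly_Mapping.keys a \<Longrightarrow> h w \<in> S) \<Longrightarrow> frag_map h a \<in> carrier (free_Abelian_group S)"
  using keys_frag_map[of h a] by auto

lemma lookup_frag_map:
  "poly_mapping.lookup (frag_map h a) k = (\<Sum>w | w \<in> Poly_Mapping.keys a \<and> h w = k. poly_mapping.lookup a w)"
proof -
  have "poly_mapping.lookup (frag_map h a) k
      = (\<Sum>w\<in>Poly_Mapping.keys a. if h w = k then poly_mapping.lookup a w else 0)"
    unfolding frag_map_def frag_extend_def by (auto simp: lookup_sum lookup_single intro: sum.cong)
  then show ?thesis
    by (simp add: sum.inter_filter)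
qed

lemma keys_frag_map_inj_on:
  assumes "inj_on h (Poly_Mapping.keys a)"
  shows "Poly_Mapping.keys (frag_map h a) = h ` Poly_Mapping.keys a"
proof
  show "h ` Poly_Mapping.keys a \<subseteq> Poly_Mapping.keys (frag_map h a)"
  proof
    fix k assume "k \<in> h ` Poly_Mapping.keys a"
    then obtain w where w: "w \<in> Poly_Mapping.keys a" "k = h w" by auto
    with assms have "{v. v \<in> Poly_Mapping.keys a \<and> h v = k} = {w}"
      by (auto simp: inj_on_def)
    then show "k \<in> Poly_Mapping.keys (frag_map h a)"
      using w by (simp add: lookup_frag_map in_keys_iff)
  qed
qed (rule keys_frag_map)

lemma frag_cmul_sum_left: "frag_cmul (sum f I) a = (\<Sum>i\<in>I. frag_cmul (f i) a)"
  by (induction I rule: infinite_finite_induct) (simp_all add: frag_cmul_distrib)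

lemma glue_restrict: "glue A (restrict g A) = glue A g"
proof
  fix u
  show "glue A (restrict g A) u = glue A g u"
  proof (cases "\<exists>F\<in>A. u \<in> simplex_set F")
    case True
    then have "(SOME F. F \<in> A \<and> u \<in> simplex_set F) \<in> A"
      by (metis (mono_tags, lifting) someI_ex)
    with True show ?thesis by (simp add: glue_def)
  qed (simp add: glue_def)
qed

lemma comb_prod_cong: "(\<And>F. F \<in> A \<Longrightarrow> S F = S' F) \<Longrightarrow> comb_prod A S = comb_prod A S'"
  unfolding comb_prod_def by (rule sum.cong) (auto intro!: PiE_cong prod.cong)

lemma comb_prod_eq_sum_PiE:
  assumes "finite A" and "\<And>F. F \<in> A \<Longrightarrow> finite (B F) \<and> Poly_Mapping.keys (S F) \<subseteq> B F"
  shows "comb_prod A S = (\<Sum>g \<in> Pi\<^sub>E A B.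
           frag_cmul (\<Prod>F\<in>A. poly_mapping.lookup (S F) (g F)) (frag_of (glue A g)))"
  unfolding comb_prod_def
proof (rule sum.mono_neutral_left)
  show "\<forall>g\<in>Pi\<^sub>E A B - Pi\<^sub>E A (\<lambda>F. Poly_Mapping.keys (S F)).
          frag_cmul (\<Prod>F\<in>A. poly_mapping.lookup (S F) (g F)) (frag_of (glue A g)) = 0"
    using assms(1) by (auto simp: PiE_iff in_keys_iff)
qed (use assms in \<open>auto simp: finite_PiE PiE_iff\<close>)

lemma prod_lookup_frag_map:
  assumes "finite A"
  shows "(\<Prod>F\<in>A. poly_mapping.lookup (frag_map (h F) (S F)) (g' F))
       = (\<Sum>g \<in> Pi\<^sub>E A (\<lambda>F. {w \<in> Poly_Mapping.keys (S F). h F w = g' F}).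
            \<Prod>F\<in>A. poly_mapping.lookup (S F) (g F))"
  unfolding lookup_frag_map using assms by (intro prod_sum_PiE) auto

lemma comb_prod_frag_map:
  assumes A: "finite A" and H: "\<And>g. H (glue A g) = glue A (\<lambda>F. h F (g F))"
  shows "comb_prod A (\<lambda>F. frag_map (h F) (S F)) = frag_map H (comb_prod A S)"
proof -
  define K where "K F = Poly_Mapping.keys (S F)" for F
  define \<rho> where "\<rho> g = restrict (\<lambda>F. h F (g F)) A" for g
  define T where "T g = frag_cmul (\<Prod>F\<in>A. poly_mapping.lookup (S F) (g F))
                                   (frag_of (glue A (\<lambda>F. h F (g F))))" for g
  have finPK: "finite (Pi\<^sub>E A K)"
    using A by (simp add: finite_PiE K_def)
  have fiber: "{g \<in> Pi\<^sub>E A K. \<rho> g = g'} = Pi\<^sub>E A (\<lambda>F. {w \<in> K F. h F w = g' F})"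
    if "g' \<in> Pi\<^sub>E A (\<lambda>F. h F ` K F)" for g'
    using that by (auto simp: PiE_iff \<rho>_def fun_eq_iff extensional_def)
  have "comb_prod A (\<lambda>F. frag_map (h F) (S F))
      = (\<Sum>g' \<in> Pi\<^sub>E A (\<lambda>F. h F ` K F).
           frag_cmul (\<Prod>F\<in>A. poly_mapping.lookup (frag_map (h F) (S F)) (g' F)) (frag_of (glue A g')))"
    using A keys_frag_map by (intro comb_prod_eq_sum_PiE) (auto simp: K_def intro: keys_frag_map[THEN subsetD])
  also have "\<dots> = (\<Sum>g' \<in> Pi\<^sub>E A (\<lambda>F. h F ` K F). sum T {g \<in> Pi\<^sub>E A K. \<rho> g = g'})"
  proof (rule sum.cong[OF refl])
    fix g' assume g': "g' \<in> Pi\<^sub>E A (\<lambda>F. h F ` K F)"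
    have "glue A g' = glue A (\<lambda>F. h F (g F))" if "g \<in> {g \<in> Pi\<^sub>E A K. \<rho> g = g'}" for g
      using that glue_restrict[of A "\<lambda>F. h F (g F)"] by (simp add: \<rho>_def)
    then have "sum T {g \<in> Pi\<^sub>E A K. \<rho> g = g'}
        = (\<Sum>g \<in> Pi\<^sub>E A (\<lambda>F. {w \<in> K F. h F w = g' F}).
             frag_cmul (\<Prod>F\<in>A. poly_mapping.lookup (S F) (g F)) (frag_of (glue A g')))"
      unfolding fiber[OF g', symmetric] by (intro sum.cong) (auto simp: T_def)
    then show "frag_cmul (\<Prod>F\<in>A. poly_mapping.lookup (frag_map (h F) (S F)) (g' F)) (frag_of (glue A g'))
        = sum T {g \<in> Pi\<^sub>E A K. \<rho> g = g'}"
      by (simp add: prod_lookup_frag_map[OF A] frag_cmul_sum_left K_def)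
  qed
  also have "\<dots> = sum T (Pi\<^sub>E A K)"
    using A by (intro sum.group[OF finPK]) (auto simp: \<rho>_def PiE_iff finite_PiE K_def)
  also have "\<dots> = frag_map H (comb_prod A S)"
    by (simp add: comb_prod_def K_def[abs_def] frag_map_sum finPK[unfolded K_def] frag_map_cmul T_def H)
  finally show ?thesis .
qed

section \<open>Simplices and fissile chains\<close>

lemma topspace_simplex_top [simp]: "topspace (simplex_top E) = simplex_set E"
  by (simp add: simplex_top_def)

lemma simplex_set_mono: "F \<subseteq> E \<Longrightarrow> finite E \<Longrightarrow> simplex_set F \<subseteq> simplex_set E"
proof
  fix t assume FE: "F \<subseteq> E" and E: "finite E" and t: "t \<in> simplex_set F"
  have "sum t E = sum t F"
    using FE E t by (intro sum.mono_neutral_right) (auto simp: simplex_set_def)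
  with t FE show "t \<in> simplex_set E"
    by (auto simp: simplex_set_def)
qed

lemma simplex_set_nonempty: "finite E \<Longrightarrow> E \<noteq> {} \<Longrightarrow> simplex_set E \<noteq> {}"
proof -
  assume "finite E" "E \<noteq> {}"
  then obtain e where "e \<in> E" "(\<Sum>i\<in>E. if i = e then 1 else 0 :: real) = 1"
    by (auto simp: sum.delta)
  then have "(\<lambda>i. if i = e then 1 else 0) \<in> simplex_set E"
    by (auto simp: simplex_set_def)
  then show ?thesis
    by blast
qed

lemma Hausdorff_space_simplex_top: "Hausdorff_space (simplex_top E)"
  unfolding simplex_top_def
  by (rule Hausdorff_space_subtopology) (simp add: Hausdorff_space_product_topology)

text \<open>The simplex is the intersection of the compact box \<open>[0,1]\<^sup>E \<times> {0}\<close> with the closed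
  hyperplane \<open>\<Sum>\<^sub>E t = 1\<close>.\<close>
lemma compact_space_simplex_top:
  assumes E: "finite E"
  shows "compact_space (simplex_top E)"
proof -
  let ?P = "powertop_real (UNIV :: nat set)"
  define K where "K = (\<Pi>\<^sub>E i\<in>(UNIV :: nat set). if i \<in> E then {0..1 :: real} else {0})"
  have "compactin ?P K"
    unfolding K_def compactin_PiE by (auto simp: compact_Icc)
  moreover have "continuous_map ?P euclideanreal (\<lambda>t. \<Sum>i\<in>E. t i)"
    by (intro continuous_map_sum E continuous_map_product_projection) auto
  then have "closedin ?P {t \<in> topspace ?P. (\<Sum>i\<in>E. t i) \<in> {1}}"
    by (rule closedin_continuous_map_preimage) simp
  moreover have "simplex_set E = {t \<in> topspace ?P. (\<Sum>i\<in>E. t i) \<in> {1}} \<inter> K"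
  proof (intro equalityI subsetI)
    fix t assume t: "t \<in> simplex_set E"
    then have "t i \<le> 1" if "i \<in> E" for i
      using that E member_le_sum[of i E t] by (simp add: simplex_set_def)
    with t show "t \<in> {t \<in> topspace ?P. (\<Sum>i\<in>E. t i) \<in> {1}} \<inter> K"
      by (simp add: simplex_set_def K_def PiE_iff)
  next
    fix t assume "t \<in> {t \<in> topspace ?P. (\<Sum>i\<in>E. t i) \<in> {1}} \<inter> K"
    then have sum: "sum t E = 1" and box: "\<And>i. t i \<in> (if i \<in> E then {0..1} else {0})"
      by (auto simp: K_def PiE_iff)
    have "t i = 0" if "i \<notin> E" for i
      using box[of i] that by simp
    moreover have "0 \<le> t i" if "i \<in> E" for i
      using box[of i] that by simp
    ultimately show "t \<in> simplex_set E"
      using sum by (simp add: simplex_set_def)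
  qed
  ultimately have "compactin ?P (simplex_set E)"
    by (simp add: closed_Int_compactin)
  then show ?thesis
    unfolding simplex_top_def by (rule compact_space_subtopology)
qed

lemma restrict_compose: "R \<subseteq> S \<Longrightarrow> restrict (compose S F w) R = compose R F (restrict w R)"
  by (auto simp: compose_def fun_eq_iff)

lemma frag_restrict_frag_map_compose:
  "R \<subseteq> S \<Longrightarrow> frag_restrict R (frag_map (compose S F) c) = frag_map (compose R F) (frag_restrict R c)"
  by (simp add: frag_restrict_eq_frag_map frag_map_compose o_def restrict_compose)

lemma compose_const_map: "compose (simplex_set E) F (const_map E v) = const_map E (F v)"
  by (simp add: compose_def const_map_def fun_eq_iff)

lemma compose_glue:
  "compose (\<Union>G\<in>A. simplex_set G) F (glue A g) = glue A (\<lambda>G. compose (simplex_set G) F (g G))"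
proof
  fix u
  show "compose (\<Union>G\<in>A. simplex_set G) F (glue A g) u = glue A (\<lambda>G. compose (simplex_set G) F (g G)) u"
  proof (cases "\<exists>G\<in>A. u \<in> simplex_set G")
    case True
    then have "(SOME G. G \<in> A \<and> u \<in> simplex_set G) \<in> A \<and> u \<in> simplex_set (SOME G. G \<in> A \<and> u \<in> simplex_set G)"
      by (metis (mono_tags, lifting) someI_ex)
    with True show ?thesis
      by (simp add: glue_def compose_def)
  qed (simp add: glue_def compose_def)
qed

lemma fissile_frag_map_compose:
  assumes E: "finite E" and S: "fissile E S"
  shows "fissile E (frag_map (compose (simplex_set E) F) S)"
  unfolding fissile_def
proof (intro allI impI)
  fix A assume A: "layout E A"
  then have "A \<subseteq> Pow E"
    by (auto simp: layout_def)
  then have "finite A"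
    using E by (simp add: finite_subset)
  have sub: "simplex_set G \<subseteq> simplex_set E" if "G \<in> A" for G
    using A that E simplex_set_mono by (auto simp: layout_def)
  let ?U = "\<Union>G\<in>A. simplex_set G"
  have "frag_restrict ?U (frag_map (compose (simplex_set E) F) S)
      = frag_map (compose ?U F) (comb_prod A (\<lambda>G. frag_restrict (simplex_set G) S))"
    using sub S A by (simp add: frag_restrict_frag_map_compose UN_least fissile_def)
  also have "\<dots> = comb_prod A (\<lambda>G. frag_map (compose (simplex_set G) F) (frag_restrict (simplex_set G) S))"
    using \<open>finite A\<close> by (intro comb_prod_frag_map[symmetric] compose_glue)
  also have "\<dots> = comb_prod A (\<lambda>G. frag_restrict (simplex_set G) (frag_map (compose (simplex_set E) F) S))"
    using sub by (intro comb_prod_cong) (simp add: frag_restrict_frag_map_compose)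
  finally show "frag_restrict ?U (frag_map (compose (simplex_set E) F) S)
      = comb_prod A (\<lambda>G. frag_restrict (simplex_set G) (frag_map (compose (simplex_set E) F) S))" .
qed

section \<open>Quotients and smash products\<close>

lemma openin_quotient_top:
  "openin (quotient_top X q) U \<longleftrightarrow> U \<subseteq> q ` topspace X \<and> openin X {x \<in> topspace X. q x \<in> U}"
proof -
  have Int: "{x \<in> topspace X. q x \<in> S \<inter> S'} = {x \<in> topspace X. q x \<in> S} \<inter> {x \<in> topspace X. q x \<in> S'}"
    for S S' by auto
  have Union: "{x \<in> topspace X. q x \<in> \<Union>\<K>} = (\<Union>K\<in>\<K>. {x \<in> topspace X. q x \<in> K})" for \<K>
    by auto
  have "istopology (\<lambda>U. U \<subseteq> q ` topspace X \<and> openin X {x \<in> topspace X. q x \<in> U})"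
    unfolding istopology_def Int Union by (auto intro!: openin_Union)
  then show ?thesis
    by (simp add: quotient_top_def)
qed

lemma topspace_quotient_top [simp]: "topspace (quotient_top X q) = q ` topspace X"
proof -
  have "{x \<in> topspace X. q x \<in> q ` topspace X} = topspace X"
    by auto
  then have "openin (quotient_top X q) (q ` topspace X)"
    unfolding openin_quotient_top by simp
  then have "q ` topspace X \<subseteq> topspace (quotient_top X q)"
    by (rule openin_subset)
  moreover have "topspace (quotient_top X q) \<subseteq> q ` topspace X"
    using openin_topspace[of "quotient_top X q"] unfolding openin_quotient_top by blast
  ultimately show ?thesis
    by blast
qed

lemma quotient_map_quotient_top: "quotient_map X (quotient_top X q) q"
  unfolding quotient_map_def by (auto simp: openin_quotient_top)

lemma collapse_cls_eq_iff: "collapse_cls A x = collapse_cls A y \<longleftrightarrow> x = y \<or> (x \<in> A \<and> y \<in> A)"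
  unfolding collapse_cls_def by auto

lemma collapse_cls_eq_self_iff: "collapse_cls A x = A \<longleftrightarrow> x \<in> A"
  unfolding collapse_cls_def by auto

lemma some_in_collapse_cls_notin: "x \<notin> A \<Longrightarrow> (SOME p. p \<in> collapse_cls A x) = x"
  unfolding collapse_cls_def by simp

lemma some_in_collapse_cls_in: "x \<in> A \<Longrightarrow> (SOME p. p \<in> collapse_cls A x) \<in> A"
  using someI[of "\<lambda>p. p \<in> A" x] by (simp add: collapse_cls_def)

lemma topspace_collapse_top [simp]: "topspace (collapse_top X A) = collapse_cls A ` topspace X"
  by (simp add: collapse_top_def)

lemma quotient_map_collapse_cls: "quotient_map X (collapse_top X A) (collapse_cls A)"
  by (simp add: collapse_top_def quotient_map_quotient_top)

lemma continuous_map_collapse_cls: "continuous_map X (collapse_top X A) (collapse_cls A)"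
  by (rule quotient_imp_continuous_map[OF quotient_map_collapse_cls])

lemma compact_space_collapse_top: "compact_space X \<Longrightarrow> compact_space (collapse_top X A)"
  using image_compactin[OF _ continuous_map_collapse_cls, of X "topspace X" A]
  by (simp add: compact_space_def)

lemma openin_collapse_top_saturated:
  assumes "openin X U" and "A \<subseteq> U \<or> A \<inter> U = {}"
  shows "openin (collapse_top X A) (collapse_cls A ` U)"
proof -
  have "{x \<in> topspace X. collapse_cls A x \<in> collapse_cls A ` U} = U"
    using assms openin_subset[OF assms(1)] by (auto simp: collapse_cls_eq_iff)
  then show ?thesis
    using assms openin_subset[OF assms(1)]
    unfolding collapse_top_def openin_quotient_top by auto
qed

lemma separation_saturated:
  assumes "compact_space X" "Hausdorff_space X" "closedin X A"
    and "x \<in> topspace X" "y \<in> topspace X" "y \<notin> A" "x \<noteq> y"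
  obtains U V where "openin X U" "openin X V" "x \<in> U" "y \<in> V" "disjnt U V"
    "A \<subseteq> U \<or> A \<inter> U = {}" "A \<inter> V = {}"
proof (cases "x \<in> A")
  case True
  have "regular_space X"
    using assms(1,2) by (rule compact_Hausdorff_imp_regular_space)
  then obtain V U where UV: "openin X V" "openin X U" "y \<in> V" "A \<subseteq> U" "disjnt V U"
    using assms(3,5,6) unfolding regular_space_def by (metis Diff_iff)
  then have "A \<inter> V = {}"
    by (auto simp: disjnt_def)
  with True UV show ?thesis
    by (intro that[of U V]) (auto simp: disjnt_sym)
next
  case False
  obtain U V where "openin X U" "openin X V" "x \<in> U" "y \<in> V" "disjnt U V"
    using assms(2,4,5,7) unfolding Hausdorff_space_def by metis
  with False assms(3,6) show ?thesis
    by (intro that[of "U - A" "V - A"]) (auto simp: disjnt_def intro!: openin_diff)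
qed

lemma Hausdorff_space_collapse_top:
  assumes X: "compact_space X" "Hausdorff_space X" and A: "closedin X A"
  shows "Hausdorff_space (collapse_top X A)"
proof -
  let ?q = "collapse_cls A"
  have sep: "\<exists>U V. openin (collapse_top X A) U \<and> openin (collapse_top X A) V \<and>
               ?q x \<in> U \<and> ?q y \<in> V \<and> disjnt U V"
    if xy: "x \<in> topspace X" "y \<in> topspace X" "y \<notin> A" "?q x \<noteq> ?q y" for x y
  proof -
    obtain U V where UV: "openin X U" "openin X V" "x \<in> U" "y \<in> V" "disjnt U V"
      "A \<subseteq> U \<or> A \<inter> U = {}" "A \<inter> V = {}"
      using separation_saturated[OF X A xy(1-3)] xy(4) by metis
    then have "disjnt (?q ` U) (?q ` V)"
      by (auto simp: disjnt_def collapse_cls_eq_iff)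
    moreover have "openin (collapse_top X A) (?q ` U)" "openin (collapse_top X A) (?q ` V)"
      using UV by (auto intro!: openin_collapse_top_saturated)
    ultimately show ?thesis
      using UV by blast
  qed
  show ?thesis
    unfolding Hausdorff_space_def
  proof (intro allI impI, elim conjE)
    fix c d assume "c \<in> topspace (collapse_top X A)" "d \<in> topspace (collapse_top X A)" "c \<noteq> d"
    then obtain x y where xy: "x \<in> topspace X" "y \<in> topspace X" "c = ?q x" "d = ?q y" "?q x \<noteq> ?q y"
      by auto
    show "\<exists>U V. openin (collapse_top X A) U \<and> openin (collapse_top X A) V \<and> c \<in> U \<and> d \<in> V \<and> disjnt U V"
    proof (cases "y \<in> A")
      case True
      then have "x \<notin> A"
        using xy(5) by (auto simp: collapse_cls_eq_iff)
      then obtain V U where "openin (collapse_top X A) V" "openin (collapse_top X A) U"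
        "?q y \<in> V" "?q x \<in> U" "disjnt V U"
        using sep[of y x] xy by metis
      with xy show ?thesis
        using disjnt_sym by blast
    qed (use sep[of x y] xy in auto)
  qed
qed

lemma topspace_smash_top:
  "topspace (smash_top X x0 T t0) = collapse_cls (smash_base X x0 T t0) ` (topspace X \<times> topspace T)"
  by (simp add: smash_top_def)

lemma closedin_smash_base:
  assumes "Hausdorff_space X" "Hausdorff_space T" "x0 \<in> topspace X" "t0 \<in> topspace T"
  shows "closedin (prod_topology X T) (smash_base X x0 T t0)"
  unfolding smash_base_def using assms
  by (intro closedin_Un) (auto simp: closedin_prod_Times_iff closedin_Hausdorff_singleton)

lemma compact_space_smash_top:
  "compact_space X \<Longrightarrow> compact_space T \<Longrightarrow> compact_space (smash_top X x0 T t0)"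
  unfolding smash_top_def by (simp add: compact_space_collapse_top compact_space_prod_topology)

lemma Hausdorff_space_smash_top:
  assumes "compact_space X" "compact_space T" "Hausdorff_space X" "Hausdorff_space T"
    "x0 \<in> topspace X" "t0 \<in> topspace T"
  shows "Hausdorff_space (smash_top X x0 T t0)"
  unfolding smash_top_def using assms
  by (intro Hausdorff_space_collapse_top closedin_smash_base)
     (auto simp: compact_space_prod_topology Hausdorff_space_prod_topology)

lemma smash_base_in_topspace_smash_top:
  assumes "x0 \<in> topspace X" "t0 \<in> topspace T"
  shows "smash_base X x0 T t0 \<in> topspace (smash_top X x0 T t0)"
proof -
  have "collapse_cls (smash_base X x0 T t0) (x0, t0) = smash_base X x0 T t0"
    using assms by (simp add: collapse_cls_eq_self_iff smash_base_def)
  with assms show ?thesis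
    by (metis SigmaI image_eqI topspace_smash_top)
qed

lemma smash_id_map_collapse:
  assumes f: "continuous_map X Y f" "f x0 = y0" and "x \<in> topspace X" "t \<in> topspace T"
  shows "smash_id_map X x0 Y y0 T t0 f (collapse_cls (smash_base X x0 T t0) (x, t))
       = collapse_cls (smash_base Y y0 T t0) (f x, t)"
proof (cases "(x, t) \<in> smash_base X x0 T t0")
  case True
  let ?p = "SOME p. p \<in> collapse_cls (smash_base X x0 T t0) (x, t)"
  have base: "(f (fst p), snd p) \<in> smash_base Y y0 T t0" if "p \<in> smash_base X x0 T t0" for p
    using that f continuous_map_image_subset_topspace[OF f(1)] by (auto simp: smash_base_def)
  have "(f (fst ?p), snd ?p) \<in> smash_base Y y0 T t0" "(f x, t) \<in> smash_base Y y0 T t0"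
    using base some_in_collapse_cls_in[OF True] True by auto
  moreover have "collapse_cls (smash_base X x0 T t0) (x, t) \<in> topspace (smash_top X x0 T t0)"
    using assms(3,4) by (simp add: topspace_smash_top)
  ultimately show ?thesis
    by (simp add: smash_id_map_def Let_def collapse_cls_eq_iff)
next
  case False
  with assms show ?thesis
    by (simp add: smash_id_map_def topspace_smash_top some_in_collapse_cls_notin)
qed

lemma smash_id_map_in_based_maps:
  assumes f: "f \<in> based_maps X x0 Y y0" and "x0 \<in> topspace X" "t0 \<in> topspace T"
  shows "smash_id_map X x0 Y y0 T t0 f \<in> based_maps (smash_top X x0 T t0) (smash_base X x0 T t0)
            (smash_top Y y0 T t0) (smash_base Y y0 T t0)"
proof -
  let ?q = "collapse_cls (smash_base X x0 T t0)" and ?qY = "collapse_cls (smash_base Y y0 T t0)"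
  let ?F = "smash_id_map X x0 Y y0 T t0 f"
  have fc: "continuous_map X Y f" and f0: "f x0 = y0"
    using f by (auto simp: based_maps_def based_map_def)
  have "continuous_map (prod_topology X T) (smash_top Y y0 T t0) (\<lambda>p. ?qY (f (fst p), snd p))"
    unfolding smash_top_def
    by (intro continuous_map_compose[OF _ continuous_map_collapse_cls, unfolded o_def]
          continuous_map_pairedI continuous_map_compose[OF continuous_map_fst fc, unfolded o_def]
          continuous_map_snd)
  then have "continuous_map (prod_topology X T) (smash_top Y y0 T t0) (?F \<circ> ?q)"
    by (rule continuous_map_eq) (auto simp: smash_id_map_collapse[OF fc f0])
  then have "continuous_map (smash_top X x0 T t0) (smash_top Y y0 T t0) ?F"
    unfolding smash_top_def
    by (simp add: continuous_compose_quotient_map_eq[OF quotient_map_collapse_cls])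
  moreover have "?q (x0, t0) = smash_base X x0 T t0" "?qY (y0, t0) = smash_base Y y0 T t0"
    using assms by (auto simp: collapse_cls_eq_self_iff smash_base_def based_maps_def based_map_def)
  then have "?F (smash_base X x0 T t0) = smash_base Y y0 T t0"
    using smash_id_map_collapse[OF fc f0 assms(2,3)] f0 by metis
  ultimately show ?thesis
    by (simp add: based_maps_def based_map_def smash_id_map_def)
qed

lemma smash_id_map_restrict:
  assumes "x0 \<in> topspace X"
  shows "smash_id_map X x0 Y y0 T t0 (restrict f (topspace X)) = smash_id_map X x0 Y y0 T t0 f"
  unfolding smash_id_map_def
proof (rule restrict_ext)
  fix c assume "c \<in> topspace (smash_top X x0 T t0)"
  then obtain x t where xt: "x \<in> topspace X" "c = collapse_cls (smash_base X x0 T t0) (x, t)"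
    by (auto simp: topspace_smash_top)
  have "fst (SOME p. p \<in> c) \<in> topspace X"
  proof (cases "(x, t) \<in> smash_base X x0 T t0")
    case True
    then show ?thesis
      using xt(2) some_in_collapse_cls_in[OF True] assms by (auto simp: smash_base_def)
  qed (use xt in \<open>simp add: some_in_collapse_cls_notin\<close>)
  then show "(let p = SOME p. p \<in> c in
               collapse_cls (smash_base Y y0 T t0) (restrict f (topspace X) (fst p), snd p))
           = (let p = SOME p. p \<in> c in collapse_cls (smash_base Y y0 T t0) (f (fst p), snd p))"
    by (simp add: Let_def)
qed

lemma restrict_smash_id_map [simp]:
  "restrict (smash_id_map X x0 Y y0 T t0 f) (topspace (smash_top X x0 T t0)) = smash_id_map X x0 Y y0 T t0 f"
  by (simp add: smash_id_map_def)

section \<open>The compact-open topology\<close>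

lemma topspace_CO_top: "topspace (CO_top X x0 Y y0) = based_maps X x0 Y y0"
proof -
  have "based_maps X x0 Y y0 \<in> {{f \<in> based_maps X x0 Y y0. f ` K \<subseteq> V} |K V. compactin X K \<and> openin Y V}"
    by (rule CollectI, rule exI[where x="{}"], rule exI[where x="{}"]) auto
  then show ?thesis
    unfolding CO_top_def topology_generated_by_topspace by blast
qed

lemma openin_CO_top_subbasic:
  "compactin X K \<Longrightarrow> openin Y V \<Longrightarrow> openin (CO_top X x0 Y y0) {f \<in> based_maps X x0 Y y0. f ` K \<subseteq> V}"
  unfolding CO_top_def by (rule topology_generated_by_Basis) blast

lemma in_based_maps_unbased_maps_CO:
  "w \<in> unbased_maps U (CO_top X x0 Y y0) \<Longrightarrow> u \<in> topspace U \<Longrightarrow> w u \<in> based_maps X x0 Y y0"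
  unfolding unbased_maps_def
  by (metis (no_types, lifting) continuous_map_image_subset_topspace image_subset_iff mem_Collect_eq topspace_CO_top)

lemma compose_in_unbased_maps:
  "continuous_map C C' F \<Longrightarrow> w \<in> unbased_maps U C \<Longrightarrow> compose (topspace U) F w \<in> unbased_maps U C'"
  unfolding unbased_maps_def compose_def
  by (auto intro: continuous_map_eq[OF continuous_map_compose[of U C w C' F]])

lemma continuous_map_path_component_of_set:
  assumes "continuous_map C C' F"
  shows "continuous_map (subtopology C (path_component_of_set C a))
           (subtopology C' (path_component_of_set C' (F a))) F"
  using assms path_component_of_continuous_image[OF assms]
  by (auto simp: continuous_map_in_subtopology continuous_map_from_subtopology)

lemma CO_top_tube_local:
  assumes X: "compact_space X" "Hausdorff_space X" and f: "f \<in> based_maps X x0 Y y0"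
    and W: "openin (prod_topology Y T) W" and x: "x \<in> topspace X" and "(f x, t) \<in> W"
  obtains N V \<O> where "openin X N" "openin T V" "x \<in> N" "t \<in> V" "openin (CO_top X x0 Y y0) \<O>" "f \<in> \<O>"
    "\<And>g x' t'. g \<in> \<O> \<Longrightarrow> x' \<in> N \<Longrightarrow> t' \<in> V \<Longrightarrow> (g x', t') \<in> W"
proof -
  obtain V1 V where V: "openin Y V1" "openin T V" "f x \<in> V1" "t \<in> V" "V1 \<times> V \<subseteq> W"
    using W[unfolded openin_prod_topology_alt, rule_format, OF \<open>(f x, t) \<in> W\<close>] by blast
  have "neighbourhood_base_of (\<lambda>C. compactin X C \<and> closedin X C) X"
    using locally_compact_regular_space_neighbourhood_base compact_imp_locally_compact_space[OF X(1)]
      compact_Hausdorff_imp_regular_space[OF X] by blast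
  moreover have "openin X {z \<in> topspace X. f z \<in> V1}"
    using f V(1) by (intro openin_continuous_map_preimage[of X Y f]) (auto simp: based_maps_def based_map_def)
  moreover have "x \<in> {z \<in> topspace X. f z \<in> V1}"
    using x V(3) by simp
  ultimately obtain N K where NK: "openin X N" "compactin X K \<and> closedin X K" "x \<in> N" "N \<subseteq> K"
      "K \<subseteq> {z \<in> topspace X. f z \<in> V1}"
    unfolding neighbourhood_base_of by meson
  let ?\<O> = "{g \<in> based_maps X x0 Y y0. g ` K \<subseteq> V1}"
  have "openin (CO_top X x0 Y y0) ?\<O>"
    using NK(2) V(1) by (auto intro: openin_CO_top_subbasic)
  moreover have "f \<in> ?\<O>"
    using f NK(5) by blast
  moreover have "(g x', t') \<in> W" if "g \<in> ?\<O>" "x' \<in> N" "t' \<in> V" for g x' t'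
    using that NK(4) V(5) by blast
  ultimately show thesis
    using that NK(1,3) V(2,4) by blast
qed

lemma openin_CO_top_tube:
  assumes X: "compact_space X" "Hausdorff_space X"
    and L: "compactin (prod_topology X T) L" and W: "openin (prod_topology Y T) W"
  shows "openin (CO_top X x0 Y y0) {f \<in> based_maps X x0 Y y0. \<forall>p\<in>L. (f (fst p), snd p) \<in> W}"
    (is "openin ?CO ?S")
  unfolding openin_subopen[of ?CO ?S]
proof
  fix f assume f: "f \<in> ?S"
  define \<G> where "\<G> = {G. openin (prod_topology X T) G \<and>
      (\<exists>\<O>. openin ?CO \<O> \<and> f \<in> \<O> \<and> (\<forall>g\<in>\<O>. \<forall>p\<in>G. (g (fst p), snd p) \<in> W))}"
  have "L \<subseteq> \<Union>\<G>"
  proof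
    fix p assume p: "p \<in> L"
    have fb: "f \<in> based_maps X x0 Y y0" and x: "fst p \<in> topspace X" and fp: "(f (fst p), snd p) \<in> W"
      using compactin_subset_topspace[OF L] f p by auto
    obtain N V \<O> where "openin X N" "openin T V" "fst p \<in> N" "snd p \<in> V" "openin ?CO \<O>"
      "f \<in> \<O>" "\<And>g x' t'. g \<in> \<O> \<Longrightarrow> x' \<in> N \<Longrightarrow> t' \<in> V \<Longrightarrow> (g x', t') \<in> W"
      using CO_top_tube_local[OF X fb W x fp] by metis
    then have "N \<times> V \<in> \<G>" "p \<in> N \<times> V"
      by (auto simp: \<G>_def openin_prod_Times_iff mem_Times_iff)
    then show "p \<in> \<Union>\<G>" by blast
  qed
  moreover have "\<forall>G\<in>\<G>. openin (prod_topology X T) G"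
    by (simp add: \<G>_def)
  ultimately obtain \<F> where \<F>: "finite \<F>" "\<F> \<subseteq> \<G>" "L \<subseteq> \<Union>\<F>"
    using L[unfolded compactin_def, THEN conjunct2, rule_format, of \<G>] by blast
  then have ex: "\<forall>G\<in>\<F>. \<exists>\<O>. openin ?CO \<O> \<and> f \<in> \<O> \<and> (\<forall>g\<in>\<O>. \<forall>p\<in>G. (g (fst p), snd p) \<in> W)"
    by (auto simp: \<G>_def)
  obtain \<O> where \<O>: "\<forall>G\<in>\<F>. openin ?CO (\<O> G) \<and> f \<in> \<O> G \<and>
      (\<forall>g\<in>\<O> G. \<forall>p\<in>G. (g (fst p), snd p) \<in> W)"
    using bchoice[OF ex] by blast
  show "\<exists>\<O>'. openin ?CO \<O>' \<and> f \<in> \<O>' \<and> \<O>' \<subseteq> ?S"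
  proof (intro exI conjI)
    show "openin ?CO ((\<Inter>G\<in>\<F>. \<O> G) \<inter> topspace ?CO)"
      using \<F>(1) \<O> by (intro openin_INT) auto
    show "f \<in> (\<Inter>G\<in>\<F>. \<O> G) \<inter> topspace ?CO"
      using f \<O> by (auto simp: topspace_CO_top)
    show "(\<Inter>G\<in>\<F>. \<O> G) \<inter> topspace ?CO \<subseteq> ?S"
      using \<O> \<F>(3) by (fastforce simp: topspace_CO_top)
  qed
qed

lemma smash_id_map_image_subset_iff:
  assumes f: "f \<in> based_maps X x0 Y y0" and K: "K \<subseteq> topspace (smash_top X x0 T t0)"
  shows "smash_id_map X x0 Y y0 T t0 f ` K \<subseteq> V \<longleftrightarrow>
         (\<forall>x\<in>topspace X. \<forall>t\<in>topspace T. collapse_cls (smash_base X x0 T t0) (x, t) \<in> K \<longrightarrow>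
              collapse_cls (smash_base Y y0 T t0) (f x, t) \<in> V)"
proof -
  have fc: "continuous_map X Y f" and f0: "f x0 = y0"
    using f by (auto simp: based_maps_def based_map_def)
  have "smash_id_map X x0 Y y0 T t0 f ` K \<subseteq> V \<longleftrightarrow>
        (\<forall>x\<in>topspace X. \<forall>t\<in>topspace T. collapse_cls (smash_base X x0 T t0) (x, t) \<in> K \<longrightarrow>
           smash_id_map X x0 Y y0 T t0 f (collapse_cls (smash_base X x0 T t0) (x, t)) \<in> V)"
    using K by (auto simp: topspace_smash_top)
  then show ?thesis
    by (simp add: smash_id_map_collapse[OF fc f0])
qed

text \<open>The preimage of a subbasic set \<open>{F. F ` K \<subseteq> V}\<close> is a tube set over the compact
  preimage of \<open>K\<close> in \<open>X \<times> T\<close>.\<close>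
lemma openin_CO_top_smash_id_map_preimage:
  assumes X: "compact_space X" "Hausdorff_space X" and T: "compact_space T" "Hausdorff_space T"
    and x0: "x0 \<in> topspace X" and t0: "t0 \<in> topspace T"
    and K: "compactin (smash_top X x0 T t0) K" and V: "openin (smash_top Y y0 T t0) V"
  shows "openin (CO_top X x0 Y y0) {f \<in> based_maps X x0 Y y0. smash_id_map X x0 Y y0 T t0 f ` K \<subseteq> V}"
proof -
  let ?q = "collapse_cls (smash_base X x0 T t0)" and ?qY = "collapse_cls (smash_base Y y0 T t0)"
  define L where "L = {p \<in> topspace (prod_topology X T). ?q p \<in> K}"
  define W where "W = {p \<in> topspace (prod_topology Y T). ?qY p \<in> V}"
  have "closedin (smash_top X x0 T t0) K"
    using Hausdorff_space_smash_top[OF X(1) T(1) X(2) T(2) x0 t0] K by (rule compactin_imp_closedin)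
  then have "closedin (prod_topology X T) L"
    unfolding L_def smash_top_def by (rule closedin_continuous_map_preimage[OF continuous_map_collapse_cls])
  then have L: "compactin (prod_topology X T) L"
    using X(1) T(1) by (simp add: closedin_compact_space compact_space_prod_topology)
  have W: "openin (prod_topology Y T) W"
    using V unfolding W_def smash_top_def by (rule openin_continuous_map_preimage[OF continuous_map_collapse_cls])
  have "smash_id_map X x0 Y y0 T t0 f ` K \<subseteq> V \<longleftrightarrow> (\<forall>p\<in>L. (f (fst p), snd p) \<in> W)"
    if f: "f \<in> based_maps X x0 Y y0" for f
  proof -
    have "f ` topspace X \<subseteq> topspace Y"
      using f by (auto simp: based_maps_def based_map_def continuous_map_image_subset_topspace)
    then show ?thesis
      using smash_id_map_image_subset_iff[OF f compactin_subset_topspace[OF K], of V]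
      by (auto simp: L_def W_def)
  qed
  then have "{f \<in> based_maps X x0 Y y0. smash_id_map X x0 Y y0 T t0 f ` K \<subseteq> V}
      = {f \<in> based_maps X x0 Y y0. \<forall>p\<in>L. (f (fst p), snd p) \<in> W}"
    by blast
  then show ?thesis
    using openin_CO_top_tube[OF X L W] by simp
qed

lemma continuous_map_smash_id_map_CO:
  assumes X: "compact_space X" "Hausdorff_space X" and T: "compact_space T" "Hausdorff_space T"
    and x0: "x0 \<in> topspace X" and t0: "t0 \<in> topspace T"
  shows "continuous_map (CO_top X x0 Y y0)
     (CO_top (smash_top X x0 T t0) (smash_base X x0 T t0) (smash_top Y y0 T t0) (smash_base Y y0 T t0))
     (smash_id_map X x0 Y y0 T t0)"
proof -
  let ?Z = "smash_top X x0 T t0" and ?z0 = "smash_base X x0 T t0"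
  let ?Y' = "smash_top Y y0 T t0" and ?y0' = "smash_base Y y0 T t0"
  let ?\<Phi> = "smash_id_map X x0 Y y0 T t0"
  let ?\<S> = "{{F \<in> based_maps ?Z ?z0 ?Y' ?y0'. F ` K \<subseteq> V} |K V. compactin ?Z K \<and> openin ?Y' V}"
  have based: "?\<Phi> ` based_maps X x0 Y y0 \<subseteq> based_maps ?Z ?z0 ?Y' ?y0'"
    by (intro image_subsetI smash_id_map_in_based_maps[OF _ x0 t0])
  moreover have "\<Union>?\<S> = based_maps ?Z ?z0 ?Y' ?y0'"
    using topspace_CO_top[of ?Z ?z0 ?Y' ?y0'] by (simp add: CO_top_def)
  moreover have "openin (CO_top X x0 Y y0) (?\<Phi> -` U \<inter> topspace (CO_top X x0 Y y0))" if "U \<in> ?\<S>" for U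
  proof -
    obtain K V where U: "U = {F \<in> based_maps ?Z ?z0 ?Y' ?y0'. F ` K \<subseteq> V}"
      and K: "compactin ?Z K" and V: "openin ?Y' V"
      using \<open>U \<in> ?\<S>\<close> by blast
    have "?\<Phi> -` U \<inter> topspace (CO_top X x0 Y y0) = {f \<in> based_maps X x0 Y y0. ?\<Phi> f ` K \<subseteq> V}"
      using based by (auto simp: U topspace_CO_top)
    then show ?thesis
      using openin_CO_top_smash_id_map_preimage[OF X T x0 t0 K V] by simp
  qed
  ultimately show ?thesis
    unfolding CO_top_def[of ?Z] by (intro continuous_on_generated_topo) (auto simp: topspace_CO_top)
qed

section \<open>The spaces \<open>U \<wr> X\<close> and the map \<open>#\<close>\<close>

lemma topspace_wr_top:
  "topspace (wr_top U X x0) = collapse_cls (wr_base U x0) ` (topspace U \<times> topspace X)"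
  by (simp add: wr_top_def wr_base_def)

lemma hash_map_collapse:
  assumes "u \<in> topspace U" "x \<in> topspace X" "x \<noteq> x0"
  shows "hash_map U X x0 w (collapse_cls (wr_base U x0) (u, x)) = w u x"
proof -
  have "(u, x) \<notin> wr_base U x0"
    using assms by (auto simp: wr_base_def)
  moreover have "collapse_cls (wr_base U x0) (u, x) \<in> topspace (wr_top U X x0)"
    using assms by (simp add: topspace_wr_top)
  ultimately show ?thesis
    by (simp add: hash_map_def wr_base_def some_in_collapse_cls_notin)
qed

lemma hash_map_wr_base:
  assumes "u \<in> topspace U" "x0 \<in> topspace X" and c: "\<And>u. u \<in> topspace U \<Longrightarrow> w u x0 = c"
  shows "hash_map U X x0 w (wr_base U x0) = c"
proof -
  have base: "(u, x0) \<in> wr_base U x0"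
    using assms by (simp add: wr_base_def)
  then have "wr_base U x0 \<in> topspace (wr_top U X x0)"
    using assms by (metis SigmaI collapse_cls_eq_self_iff image_eqI topspace_wr_top)
  moreover have "(SOME p. p \<in> wr_base U x0) \<in> wr_base U x0"
    using base by (rule someI)
  ultimately show ?thesis
    using c by (auto simp: hash_map_def Let_def wr_base_def)
qed

lemma inj_on_hash_map: "inj_on (hash_map U X x0) (unbased_maps U (CO_top X x0 Y y0))"
proof (rule inj_onI, rule ext, rule ext)
  fix w w' u x
  assume w: "w \<in> unbased_maps U (CO_top X x0 Y y0)" and w': "w' \<in> unbased_maps U (CO_top X x0 Y y0)"
    and eq: "hash_map U X x0 w = hash_map U X x0 w'"
  show "w u x = w' u x"
  proof (cases "u \<in> topspace U")
    case u: True
    then have "w u \<in> based_maps X x0 Y y0" "w' u \<in> based_maps X x0 Y y0"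
      using w w' by (auto intro: in_based_maps_unbased_maps_CO)
    then show ?thesis
      using hash_map_collapse[OF u, of x X x0 w] hash_map_collapse[OF u, of x X x0 w'] eq
      by (cases "x \<in> topspace X \<and> x \<noteq> x0") (auto simp: based_maps_def based_map_def extensional_def)
  qed (use w w' in \<open>simp add: unbased_maps_def extensional_def\<close>)
qed

lemma hash_map_collapse_based:
  assumes w: "w \<in> unbased_maps U (CO_top X x0 Y y0)" and x0: "x0 \<in> topspace X"
    and u: "u \<in> topspace U" and x: "x \<in> topspace X"
  shows "hash_map U X x0 w (collapse_cls (wr_base U x0) (u, x)) = w u x"
proof (cases "x = x0")
  case True
  have "w v x0 = y0" if "v \<in> topspace U" for v
    using in_based_maps_unbased_maps_CO[OF w that] by (simp add: based_maps_def based_map_def)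
  moreover have "collapse_cls (wr_base U x0) (u, x) = wr_base U x0"
    using u True by (simp add: collapse_cls_eq_self_iff wr_base_def)
  ultimately show ?thesis
    using hash_map_wr_base[OF u x0, of w y0] u True by simp
qed (simp add: hash_map_collapse u x)

lemma hash_map_compose_smash_id_map:
  assumes w: "w \<in> unbased_maps U (CO_top X x0 Y y0)" and x0: "x0 \<in> topspace X" and t0: "t0 \<in> topspace T"
    and u: "u \<in> topspace U" and x: "x \<in> topspace X" and t: "t \<in> topspace T"
  shows "hash_map U (smash_top X x0 T t0) (smash_base X x0 T t0)
           (compose (topspace U) (smash_id_map X x0 Y y0 T t0) w)
           (collapse_cls (wr_base U (smash_base X x0 T t0)) (u, collapse_cls (smash_base X x0 T t0) (x, t)))
       = collapse_cls (smash_base Y y0 T t0) (w u x, t)"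
proof -
  let ?Z = "smash_top X x0 T t0" and ?z0 = "smash_base X x0 T t0" and ?y0' = "smash_base Y y0 T t0"
  let ?q = "collapse_cls ?z0" and ?w' = "compose (topspace U) (smash_id_map X x0 Y y0 T t0) w"
  have \<Phi>w: "smash_id_map X x0 Y y0 T t0 (w v) \<in> based_maps ?Z ?z0 (smash_top Y y0 T t0) ?y0'"
    if "v \<in> topspace U" for v
    using smash_id_map_in_based_maps[OF in_based_maps_unbased_maps_CO[OF w that] x0 t0] .
  have w'q: "?w' u (?q (x, t)) = collapse_cls ?y0' (w u x, t)"
    using in_based_maps_unbased_maps_CO[OF w u] u x t
    by (simp add: compose_eq smash_id_map_collapse based_maps_def based_map_def)
  show ?thesis
  proof (cases "?q (x, t) = ?z0")
    case True
    then have "collapse_cls (wr_base U ?z0) (u, ?q (x, t)) = wr_base U ?z0"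
      using u by (simp add: collapse_cls_eq_self_iff wr_base_def)
    moreover have "hash_map U ?Z ?z0 ?w' (wr_base U ?z0) = ?y0'"
      using \<Phi>w smash_base_in_topspace_smash_top[OF x0 t0]
      by (intro hash_map_wr_base[OF u]) (simp_all add: compose_eq based_maps_def based_map_def)
    moreover have "?w' u ?z0 = ?y0'"
      using \<Phi>w[OF u] u by (simp add: compose_eq based_maps_def based_map_def)
    ultimately show ?thesis
      using True w'q by metis
  next
    case False
    moreover have "?q (x, t) \<in> topspace ?Z"
      using x t by (simp add: topspace_smash_top)
    ultimately show ?thesis
      using hash_map_collapse[OF u _ False, where w="?w'"] w'q by simp
  qed
qed

lemma quotient_map_wr_smash_top:
  assumes U: "compact_space U" "Hausdorff_space U"
    and X: "compact_space X" "Hausdorff_space X" and T: "compact_space T" "Hausdorff_space T"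
    and x0: "x0 \<in> topspace X" and t0: "t0 \<in> topspace T"
  shows "quotient_map (prod_topology U (prod_topology X T))
           (wr_top U (smash_top X x0 T t0) (smash_base X x0 T t0))
           (\<lambda>p. collapse_cls (wr_base U (smash_base X x0 T t0)) (fst p, collapse_cls (smash_base X x0 T t0) (snd p)))"
proof (rule continuous_imp_quotient_map)
  let ?Z = "smash_top X x0 T t0" and ?z0 = "smash_base X x0 T t0"
  have Z: "compact_space ?Z" "Hausdorff_space ?Z"
    using compact_space_smash_top[OF X(1) T(1)] Hausdorff_space_smash_top[OF X(1) T(1) X(2) T(2) x0 t0] .
  have "?z0 \<in> topspace ?Z"
    using x0 t0 by (rule smash_base_in_topspace_smash_top)
  then show "Hausdorff_space (wr_top U ?Z ?z0)"
    unfolding wr_top_def using U Z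
    by (intro Hausdorff_space_collapse_top)
       (auto simp: compact_space_prod_topology Hausdorff_space_prod_topology closedin_prod_Times_iff
         closedin_Hausdorff_singleton)
  show "continuous_map (prod_topology U (prod_topology X T)) (wr_top U ?Z ?z0)
          (\<lambda>p. collapse_cls (wr_base U ?z0) (fst p, collapse_cls ?z0 (snd p)))"
    unfolding wr_top_def wr_base_def smash_top_def
    by (intro continuous_map_compose[OF _ continuous_map_collapse_cls, unfolded o_def]
          continuous_map_pairedI continuous_map_fst
          continuous_map_compose[OF continuous_map_snd continuous_map_collapse_cls, unfolded o_def])
  show "compact_space (prod_topology U (prod_topology X T))"
    using U X T by (simp add: compact_space_prod_topology)
  show "(\<lambda>p. collapse_cls (wr_base U ?z0) (fst p, collapse_cls ?z0 (snd p))) `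
          topspace (prod_topology U (prod_topology X T)) = topspace (wr_top U ?Z ?z0)"
    by (force simp: topspace_wr_top topspace_smash_top)
qed

text \<open>\<open>#(\<Phi> \<circ> w)\<close> is continuous because it factors through the quotient map above as
  \<open>(u, x, t) \<mapsto> #w(u \<wr> x) \<and> t\<close>.\<close>
lemma hash_map_compose_smash_id_map_in_based_maps:
  assumes U: "compact_space U" "Hausdorff_space U" "u0 \<in> topspace U"
    and X: "compact_space X" "Hausdorff_space X" and T: "compact_space T" "Hausdorff_space T"
    and x0: "x0 \<in> topspace X" and t0: "t0 \<in> topspace T"
    and w: "w \<in> unbased_maps U (CO_top X x0 Y y0)"
    and hw: "hash_map U X x0 w \<in> based_maps (wr_top U X x0) (wr_base U x0) Y y0"
  shows "hash_map U (smash_top X x0 T t0) (smash_base X x0 T t0)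
            (compose (topspace U) (smash_id_map X x0 Y y0 T t0) w)
         \<in> based_maps (wr_top U (smash_top X x0 T t0) (smash_base X x0 T t0))
              (wr_base U (smash_base X x0 T t0)) (smash_top Y y0 T t0) (smash_base Y y0 T t0)"
proof -
  let ?Z = "smash_top X x0 T t0" and ?z0 = "smash_base X x0 T t0"
  let ?h = "hash_map U X x0 w"
  let ?h' = "hash_map U ?Z ?z0 (compose (topspace U) (smash_id_map X x0 Y y0 T t0) w)"
  let ?\<theta> = "\<lambda>p. collapse_cls (wr_base U ?z0) (fst p, collapse_cls ?z0 (snd p))"
  let ?G = "\<lambda>p. collapse_cls (smash_base Y y0 T t0) (?h (collapse_cls (wr_base U x0) (fst p, fst (snd p))), snd (snd p))"
  have hc: "continuous_map (wr_top U X x0) Y ?h"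
    using hw by (simp add: based_maps_def based_map_def)
  have "continuous_map (prod_topology U (prod_topology X T)) (wr_top U X x0)
          (\<lambda>p. collapse_cls (wr_base U x0) (fst p, fst (snd p)))"
    unfolding wr_top_def wr_base_def
    by (intro continuous_map_compose[OF _ continuous_map_collapse_cls, unfolded o_def]
          continuous_map_pairedI continuous_map_fst
          continuous_map_compose[OF continuous_map_snd continuous_map_fst, unfolded o_def])
  then have "continuous_map (prod_topology U (prod_topology X T)) (smash_top Y y0 T t0) ?G"
    unfolding smash_top_def
    by (intro continuous_map_compose[OF _ continuous_map_collapse_cls, unfolded o_def]
          continuous_map_pairedI continuous_map_compose[OF _ hc, unfolded o_def]
          continuous_map_compose[OF continuous_map_snd continuous_map_snd, unfolded o_def])
  then have "continuous_map (prod_topology U (prod_topology X T)) (smash_top Y y0 T t0) (?h' \<circ> ?\<theta>)"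
    by (rule continuous_map_eq) (auto simp: hash_map_compose_smash_id_map[OF w x0 t0] hash_map_collapse_based[OF w x0])
  then have "continuous_map (wr_top U ?Z ?z0) (smash_top Y y0 T t0) ?h'"
    by (simp add: continuous_compose_quotient_map_eq[OF quotient_map_wr_smash_top[OF U(1,2) X T x0 t0]])
  moreover have "?h' (wr_base U ?z0) = smash_base Y y0 T t0"
    using smash_id_map_in_based_maps[OF in_based_maps_unbased_maps_CO[OF w] x0 t0]
      smash_base_in_topspace_smash_top[OF x0 t0]
    by (intro hash_map_wr_base[OF U(3)]) (simp_all add: compose_eq based_maps_def based_map_def)
  ultimately show ?thesis
    by (simp add: based_maps_def based_map_def hash_map_def)
qed

lemma wr_smash_top_representative:
  assumes x0: "x0 \<in> topspace X" and t0: "t0 \<in> topspace T"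
    and \<rho>: "\<rho> \<in> topspace (wr_top U (smash_top X x0 T t0) (smash_base X x0 T t0))"
  shows "\<exists>p. p \<in> topspace (prod_topology U (prod_topology X T)) \<and>
           \<rho> = collapse_cls (wr_base U (smash_base X x0 T t0)) (fst p, collapse_cls (smash_base X x0 T t0) (snd p)) \<and>
           (\<rho> = wr_base U (smash_base X x0 T t0) \<longrightarrow> fst (snd p) = x0)"
proof (cases "\<rho> = wr_base U (smash_base X x0 T t0)")
  case True
  obtain u where "u \<in> topspace U"
    using \<rho> by (auto simp: topspace_wr_top)
  moreover have "collapse_cls (smash_base X x0 T t0) (x0, t0) = smash_base X x0 T t0"
    using x0 t0 by (simp add: collapse_cls_eq_self_iff smash_base_def)
  moreover have "collapse_cls (wr_base U (smash_base X x0 T t0)) (u, smash_base X x0 T t0)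
      = wr_base U (smash_base X x0 T t0)" if "u \<in> topspace U" for u
    using that by (simp add: collapse_cls_eq_self_iff wr_base_def)
  ultimately show ?thesis
    using True x0 t0 by (intro exI[of _ "(u, x0, t0)"]) simp_all
next
  case False
  obtain u z where "u \<in> topspace U" "z \<in> topspace (smash_top X x0 T t0)"
    "\<rho> = collapse_cls (wr_base U (smash_base X x0 T t0)) (u, z)"
    using \<rho> by (auto simp: topspace_wr_top)
  moreover obtain x t where "x \<in> topspace X" "t \<in> topspace T" "z = collapse_cls (smash_base X x0 T t0) (x, t)"
    using \<open>z \<in> topspace (smash_top X x0 T t0)\<close> by (auto simp: topspace_smash_top)
  ultimately show ?thesis
    using False by (intro exI[of _ "(u, x, t)"]) simp_all
qed

lemma image_in_Fin_pts:
  assumes "R \<in> Fin_pts X x0 n" "f ` R \<subseteq> topspace Y" "f x0 = y0"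
  shows "f ` R \<in> Fin_pts Y y0 n"
  using assms card_image_le[of R f] by (force simp: Fin_pts_def)

text \<open>\<open>R'\<close> is the image of \<open>R\<close> under a choice of representatives \<open>(u, x, t) \<mapsto> u \<wr> x\<close>,
  hence no larger than \<open>R\<close>; this is why the filtration degree is preserved.\<close>
lemma restrict_hash_map_compose_smash_id_map:
  assumes x0: "x0 \<in> topspace X" and t0: "t0 \<in> topspace T"
    and R: "R \<in> Fin_pts (wr_top U (smash_top X x0 T t0) (smash_base X x0 T t0)) (wr_base U (smash_base X x0 T t0)) n"
  shows "\<exists>R' \<in> Fin_pts (wr_top U X x0) (wr_base U x0) n. \<exists>G. \<forall>w \<in> unbased_maps U (CO_top X x0 Y y0).
           restrict (hash_map U (smash_top X x0 T t0) (smash_base X x0 T t0)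
                       (compose (topspace U) (smash_id_map X x0 Y y0 T t0) w)) R
           = G (restrict (hash_map U X x0 w) R')"
proof -
  let ?Z = "smash_top X x0 T t0" and ?z0 = "smash_base X x0 T t0"
  have base: "wr_base U ?z0 \<in> R" and "R \<subseteq> topspace (wr_top U ?Z ?z0)"
    using R by (auto simp: Fin_pts_def)
  then have "\<forall>\<rho>\<in>R. \<exists>p. p \<in> topspace (prod_topology U (prod_topology X T)) \<and>
          \<rho> = collapse_cls (wr_base U ?z0) (fst p, collapse_cls ?z0 (snd p)) \<and>
          (\<rho> = wr_base U ?z0 \<longrightarrow> fst (snd p) = x0)"
    using wr_smash_top_representative[OF x0 t0] by blast
  from bchoice[OF this] obtain rep where rep: "\<forall>\<rho>\<in>R. rep \<rho> \<in> topspace (prod_topology U (prod_topology X T)) \<and>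
          \<rho> = collapse_cls (wr_base U ?z0) (fst (rep \<rho>), collapse_cls ?z0 (snd (rep \<rho>))) \<and>
          (\<rho> = wr_base U ?z0 \<longrightarrow> fst (snd (rep \<rho>)) = x0)" ..
  have rep_cases: "\<exists>u x t. rep \<rho> = (u, x, t) \<and> u \<in> topspace U \<and> x \<in> topspace X \<and> t \<in> topspace T \<and>
      \<rho> = collapse_cls (wr_base U ?z0) (u, collapse_cls ?z0 (x, t))" if "\<rho> \<in> R" for \<rho>
    using rep that by (auto simp: prod_eq_iff)
  define \<psi> where "\<psi> \<rho> = collapse_cls (wr_base U x0) (fst (rep \<rho>), fst (snd (rep \<rho>)))" for \<rho>
  define G where "G k = restrict (\<lambda>\<rho>. collapse_cls (smash_base Y y0 T t0) (k (\<psi> \<rho>), snd (snd (rep \<rho>)))) R"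
    for k
  have "\<psi> ` R \<in> Fin_pts (wr_top U X x0) (wr_base U x0) n"
  proof (rule image_in_Fin_pts[OF R])
    show "\<psi> ` R \<subseteq> topspace (wr_top U X x0)"
      using rep_cases by (force simp: \<psi>_def topspace_wr_top)
    show "\<psi> (wr_base U ?z0) = wr_base U x0"
      using rep_cases[OF base] rep base by (force simp: \<psi>_def collapse_cls_eq_self_iff wr_base_def)
  qed
  moreover have "restrict (hash_map U ?Z ?z0 (compose (topspace U) (smash_id_map X x0 Y y0 T t0) w)) R
      = G (restrict (hash_map U X x0 w) (\<psi> ` R))" if w: "w \<in> unbased_maps U (CO_top X x0 Y y0)" for w
  proof
    fix \<rho>
    show "restrict (hash_map U ?Z ?z0 (compose (topspace U) (smash_id_map X x0 Y y0 T t0) w)) R \<rho>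
        = G (restrict (hash_map U X x0 w) (\<psi> ` R)) \<rho>"
    proof (cases "\<rho> \<in> R")
      case True
      moreover obtain u x t where "rep \<rho> = (u, x, t)" "u \<in> topspace U" "x \<in> topspace X" "t \<in> topspace T"
        "\<rho> = collapse_cls (wr_base U ?z0) (u, collapse_cls ?z0 (x, t))"
        using rep_cases[OF True] by blast
      moreover have "\<psi> \<rho> \<in> \<psi> ` R"
        using True by blast
      ultimately show ?thesis
        using hash_map_compose_smash_id_map[OF w x0 t0] hash_map_collapse_based[OF w x0]
        by (simp add: G_def \<psi>_def)
    qed (simp add: G_def)
  qed
  ultimately show ?thesis
    by blast
qed

section \<open>The filtration\<close>

lemma frag_map_in_filt:
  assumes V: "frag_map g V \<in> filt X x0 Y y0 s"
    and h: "\<And>w. w \<in> Poly_Mapping.keys V \<Longrightarrow> h w \<in> based_maps X' x0' Y' y0'"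
    and factor: "\<And>R. R \<in> Fin_pts X' x0' (s - 1) \<Longrightarrow>
       \<exists>R' \<in> Fin_pts X x0 (s - 1). \<exists>G. \<forall>w \<in> Poly_Mapping.keys V. restrict (h w) R = G (restrict (g w) R')"
  shows "frag_map h V \<in> filt X' x0' Y' y0' s"
proof -
  have "frag_restrict R (frag_map h V) = 0" if s: "0 < s" and R: "R \<in> Fin_pts X' x0' (s - 1)" for R
  proof -
    obtain R' G where R': "R' \<in> Fin_pts X x0 (s - 1)"
      and G: "\<forall>w \<in> Poly_Mapping.keys V. restrict (h w) R = G (restrict (g w) R')"
      using factor[OF R] by blast
    have "frag_restrict R (frag_map h V) = frag_map (G \<circ> (\<lambda>w. restrict (g w) R')) V"
      unfolding frag_restrict_eq_frag_map frag_map_compose using G by (intro frag_map_cong) simp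
    also have "\<dots> = frag_map G (frag_restrict R' (frag_map g V))"
      by (simp add: frag_restrict_eq_frag_map frag_map_compose o_def)
    also have "\<dots> = 0"
      using V s R' by (simp add: filt_def frag_map_def)
    finally show ?thesis .
  qed
  moreover have "frag_map h V \<in> carrier (free_Abelian_group (based_maps X' x0' Y' y0'))"
    using h by (rule frag_map_in_free_Abelian_group)
  ultimately show ?thesis
    by (simp add: filt_def)
qed

lemma frag_map_compose_smash_id_map_in_filt_hash:
  assumes U: "compact_space U" "Hausdorff_space U" "u0 \<in> topspace U"
    and X: "compact_space X" "Hausdorff_space X" and T: "compact_space T" "Hausdorff_space T"
    and x0: "x0 \<in> topspace X" and t0: "t0 \<in> topspace T"
    and V: "V \<in> filt_hash U X x0 Y y0 s"
  shows "frag_map (compose (topspace U) (smash_id_map X x0 Y y0 T t0)) V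
     \<in> filt_hash U (smash_top X x0 T t0) (smash_base X x0 T t0) (smash_top Y y0 T t0) (smash_base Y y0 T t0) s"
proof -
  let ?Z = "smash_top X x0 T t0" and ?z0 = "smash_base X x0 T t0"
  let ?Y' = "smash_top Y y0 T t0" and ?y0' = "smash_base Y y0 T t0"
  let ?P = "compose (topspace U) (smash_id_map X x0 Y y0 T t0)"
  have keys: "Poly_Mapping.keys V \<subseteq> unbased_maps U (CO_top X x0 Y y0)"
    and hV: "frag_map (hash_map U X x0) V \<in> filt (wr_top U X x0) (wr_base U x0) Y y0 s"
    using V by (auto simp: filt_hash_def frag_extend_frag_of_eq_frag_map)
  have hb: "hash_map U X x0 w \<in> based_maps (wr_top U X x0) (wr_base U x0) Y y0"
    if "w \<in> Poly_Mapping.keys V" for w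
  proof -
    have "Poly_Mapping.keys (frag_map (hash_map U X x0) V) = hash_map U X x0 ` Poly_Mapping.keys V"
      using keys by (intro keys_frag_map_inj_on inj_on_subset[OF inj_on_hash_map])
    then show ?thesis
      using hV that by (auto simp: filt_def)
  qed
  have "frag_map (hash_map U ?Z ?z0 \<circ> ?P) V \<in> filt (wr_top U ?Z ?z0) (wr_base U ?z0) ?Y' ?y0' s"
  proof (rule frag_map_in_filt[OF hV])
    show "(hash_map U ?Z ?z0 \<circ> ?P) w \<in> based_maps (wr_top U ?Z ?z0) (wr_base U ?z0) ?Y' ?y0'"
      if "w \<in> Poly_Mapping.keys V" for w
      using hash_map_compose_smash_id_map_in_based_maps[OF U X T x0 t0 _ hb[OF that]] keys that by auto
    show "\<exists>R' \<in> Fin_pts (wr_top U X x0) (wr_base U x0) (s - 1). \<exists>G. \<forall>w \<in> Poly_Mapping.keys V.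
            restrict ((hash_map U ?Z ?z0 \<circ> ?P) w) R = G (restrict (hash_map U X x0 w) R')"
      if "R \<in> Fin_pts (wr_top U ?Z ?z0) (wr_base U ?z0) (s - 1)" for R
      using restrict_hash_map_compose_smash_id_map[OF x0 t0 that, of Y y0] keys by (simp add: subset_iff) blast
  qed
  moreover have "frag_map ?P V \<in> carrier (free_Abelian_group (unbased_maps U (CO_top ?Z ?z0 ?Y' ?y0')))"
    using keys continuous_map_smash_id_map_CO[OF X T x0 t0]
    by (intro frag_map_in_free_Abelian_group compose_in_unbased_maps) auto
  ultimately show ?thesis
    by (simp add: filt_hash_def frag_extend_frag_of_eq_frag_map frag_map_compose)
qed

section \<open>Smashing preserves \<open>r\<close>-similarity\<close>

lemma r_approx_smash_id_map:
  assumes X: "compact_space X" "Hausdorff_space X" and T: "compact_space T" "Hausdorff_space T"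
    and x0: "x0 \<in> topspace X" and t0: "t0 \<in> topspace T" and ab: "r_approx r X x0 Y y0 a b"
  shows "r_approx r (smash_top X x0 T t0) (smash_base X x0 T t0) (smash_top Y y0 T t0) (smash_base Y y0 T t0)
           (smash_id_map X x0 Y y0 T t0 a) (smash_id_map X x0 Y y0 T t0 b)"
  unfolding r_approx_def
proof (intro allI impI)
  let ?Z = "smash_top X x0 T t0" and ?z0 = "smash_base X x0 T t0"
  let ?Y' = "smash_top Y y0 T t0" and ?y0' = "smash_base Y y0 T t0"
  let ?\<Phi> = "smash_id_map X x0 Y y0 T t0" and ?CO = "CO_top X x0 Y y0" and ?CO' = "CO_top ?Z ?z0 ?Y' ?y0'"
  let ?C = "subtopology ?CO (path_component_of_set ?CO (restrict a (topspace X)))"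
  let ?C' = "subtopology ?CO' (path_component_of_set ?CO' (restrict (?\<Phi> a) (topspace ?Z)))"
  fix E :: "nat set" assume E: "finite E \<and> E \<noteq> {}"
  then obtain S where S: "S \<in> carrier (free_Abelian_group (unbased_maps (simplex_top E) ?C))" "fissile E S"
    "frag_of (const_map E (restrict b (topspace X))) - S \<in> filt_hash (simplex_top E) X x0 Y y0 (Suc r)"
    using ab unfolding r_approx_def by blast
  let ?S' = "frag_map (compose (simplex_set E) ?\<Phi>) S"
  have "continuous_map ?C ?C' ?\<Phi>"
    using continuous_map_path_component_of_set[OF continuous_map_smash_id_map_CO[OF X T x0 t0, of Y y0],
        of "restrict a (topspace X)"]
    by (simp add: smash_id_map_restrict[OF x0])
  then have "?S' \<in> carrier (free_Abelian_group (unbased_maps (simplex_top E) ?C'))"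
    using S(1) compose_in_unbased_maps[of ?C ?C' ?\<Phi> _ "simplex_top E"]
    by (intro frag_map_in_free_Abelian_group) auto
  moreover have "fissile E ?S'"
    using E S(2) by (simp add: fissile_frag_map_compose)
  moreover have "frag_of (const_map E (restrict (?\<Phi> b) (topspace ?Z))) - ?S'
      \<in> filt_hash (simplex_top E) ?Z ?z0 ?Y' ?y0' (Suc r)"
  proof -
    obtain u0 where "u0 \<in> topspace (simplex_top E)"
      using E simplex_set_nonempty by fastforce
    from frag_map_compose_smash_id_map_in_filt_hash[OF compact_space_simplex_top Hausdorff_space_simplex_top
        this X T x0 t0 S(3)] E
    show ?thesis
      by (simp add: frag_map_diff compose_const_map smash_id_map_restrict[OF x0])
  qed
  ultimately show "\<exists>S. S \<in> carrier (free_Abelian_group (unbased_maps (simplex_top E) ?C')) \<and> fissile E S \<and>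
      frag_of (const_map E (restrict (?\<Phi> b) (topspace ?Z))) - S \<in> filt_hash (simplex_top E) ?Z ?z0 ?Y' ?y0' (Suc r)"
    by blast
qed

lemma cellular_space_imp_basepoint:
  assumes "cellular_space X x0"
  shows "x0 \<in> topspace X"
proof -
  obtain C c where "cw_structure X C" "c \<in> C" "open_cell c = {x0}"
    using assms unfolding cellular_space_def by blast
  moreover from \<open>cw_structure X C\<close> have "(\<Union>c\<in>C. open_cell c) = topspace X"
    by (simp add: cw_structure_def)
  ultimately show ?thesis
    by blast
qed

theorem corollary5p3:
  fixes X :: "'a topology" and Y :: "'b topology" and T :: "'c topology"
    and x0 :: 'a and y0 :: 'b and t0 :: 'c and r :: nat and a b :: "'a \<Rightarrow> 'b"
  assumes "cellular_space X x0" and "cellular_space Y y0" and "cellular_space T t0"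
    and "compact_space X" and "compact_space T"
    and "based_map X x0 Y y0 a" and "based_map X x0 Y y0 b"
    and "r_approx r X x0 Y y0 a b"
  shows "r_approx r (smash_top X x0 T t0) (smash_base X x0 T t0)
                    (smash_top Y y0 T t0) (smash_base Y y0 T t0)
                    (smash_id_map X x0 Y y0 T t0 a) (smash_id_map X x0 Y y0 T t0 b)"
proof -
  have "Hausdorff_space X" "Hausdorff_space T"
    using assms(1,3) by (simp_all add: cellular_space_def)
  with assms show ?thesis
    by (intro r_approx_smash_id_map cellular_space_imp_basepoint)
qed

end
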